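(* Let $a,b \ge 3$ be odd coprime integers. Let $G = \mathbb{D}_8^* \times_{\mathbb{Z}_2} \mathbb{D}_{4a}^* \times \mathbb{Z}_b$, where $\mathbb{D}_8^* \times_{\mathbb{Z}_2} \mathbb{D}_{4a}^*$ is the central product of $\mathbb{D}_8^*$ and $\mathbb{D}_{4a}^*$ obtained from their direct product by identifying their unique central involutions. Then $G$ does not admit a faithful orientation-preserving linear (orthogonal) action on $S^3$, i.e. $G$ is not isomorphic to a subgroup of $\mathrm{SO}(4)$.
   Context: $\mathbb{D}_{4m}^*$ denotes the binary dihedral (generalized quaternion) group of order $4m$, $\langle u,v \mid u^{2m}=1,\ v^2=u^m,\ vuv^{-1}=u^{-1}\rangle$; in particular $\mathbb{D}_8^*$ is the quaternion group of order 8. $\mathbb{Z}_b$ is the cyclic group of order $b$. *)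

theory Defs
  imports "HOL-Analysis.Analysis" "HOL-Algebra.Elementary_Groups" "HOL-Algebra.Coset"
begin

text \<open>Binary dihedral group of order 4m, presented as
  element u^i v^e encoded as pair (i,e), 0 <= i < 2m, e in {0,1}; relations
  u^(2m) = 1, v^2 = u^m, v u v^-1 = u^-1.\<close>
definition bin_dihedral :: "nat \<Rightarrow> (int \<times> int) monoid" where
  "bin_dihedral m =
     \<lparr>carrier = {0..<2 * int m} \<times> {0, 1},
      mult = (\<lambda>(i, e) (j, f).
        if e = 0 then ((i + j) mod (2 * int m), f)
        else if f = 0 then ((i - j) mod (2 * int m), 1)
        else ((i - j + int m) mod (2 * int m), 0)),
      one = (0, 0)\<rparr>"

definition bin_dihedral_z :: "nat \<Rightarrow> int \<times> int" where
  "bin_dihedral_z m = (int m, 0)"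

definition central_prod_bd ::
  "nat \<Rightarrow> nat \<Rightarrow> ((int \<times> int) \<times> (int \<times> int)) set monoid" where
  "central_prod_bd m n =
     (bin_dihedral m \<times>\<times> bin_dihedral n) Mod
       {((0, 0), (0, 0)), (bin_dihedral_z m, bin_dihedral_z n)}"

definition G_ab :: "nat \<Rightarrow> nat \<Rightarrow> (((int \<times> int) \<times> (int \<times> int)) set \<times> int) monoid" where
  "G_ab a b = central_prod_bd 2 a \<times>\<times> integer_mod_group b"

definition SO4 :: "(real^4^4) monoid" where
  "SO4 = \<lparr>carrier = {A. orthogonal_matrix A \<and> det A = 1}, mult = (**), one = mat 1\<rparr>"

end

theory Submission
  imports Defs
begin

text \<open>Suppose \<open>G\<close> embeds in \<open>SO(4)\<close>. The images \<open>I\<close>, \<open>J\<close> of the quaternion units of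
  \<open>D\<^sup>*\<^sub>8\<close> satisfy the defining relations of \<open>D\<^sup>*\<^sub>8\<close>, and \<open>I\<^sup>2 = -1\<close>: a nonzero vector \<open>y\<close>
  in the \<open>(-1)\<close>-eigenspace of the involution \<open>I\<^sup>2\<close> gives the orthogonal frame
  \<open>y, Iy, Jy, IJy\<close> of \<open>\<real>\<^sup>4\<close>, which forces that eigenspace to be everything. The same frame shows
  that a symmetric matrix commuting with \<open>I\<close> and \<open>J\<close> is scalar, i.e. the commutant of \<open>I, J\<close> is
  a copy of the quaternions. The image \<open>C\<close> of the generator of \<open>\<int>\<^sub>b\<close> lies in it and \<open>C\<^sup>2 \<noteq> 1\<close>,
  so its imaginary part \<open>D = C - C\<^sup>T\<close> is nonzero with \<open>D\<^sup>2\<close> scalar, and every orthogonal matrix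
  commuting with \<open>I, J, C\<close> has the form \<open>\<alpha> + p D\<close>. The generators \<open>u, v\<close> of \<open>D\<^sup>*\<^sub>4\<^sub>a\<close> map to
  such matrices, hence would commute, but \<open>u v \<noteq> v u\<close> in \<open>G\<close>.\<close>

lemma mat_matrix_vector_mult: "mat k *v x = k *\<^sub>R (x :: real^'n)"
  by (metis matrix_scaleR matrix_vector_mul(2) linear_scaleR)

lemma matrix_vector_mult_uminus: "A *v (- x) = - (A *v (x :: real^'n))"
  by (metis matrix_vector_mult_0_right matrix_vector_mult_diff_distrib diff_0)

lemma uminus_matrix_vector_mult: "(- A) *v x = - (A *v (x :: real^'n))"
  by (simp add: vec_eq_iff matrix_vector_mult_def sum_negf)

lemma transpose_add: "transpose (A + B) = transpose A + (transpose B :: real^'n^'m)"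
  by (simp add: transpose_def vec_eq_iff)

lemma transpose_diff: "transpose (A - B) = transpose A - (transpose B :: real^'n^'m)"
  by (simp add: transpose_def vec_eq_iff)

lemma matrix_add_rdistrib: "(A + B) ** C = A ** C + B ** (C :: real^'n^'m)"
  by (simp add: matrix_eq matrix_vector_mul_assoc[symmetric] matrix_vector_mult_add_rdistrib)

lemma matrix_diff_ldistrib: "A ** (B - C) = A ** B - A ** (C :: real^'n^'m)"
  by (simp add: matrix_eq matrix_vector_mul_assoc[symmetric] matrix_vector_mult_diff_distrib
      matrix_vector_mult_diff_rdistrib)

lemma matrix_diff_rdistrib: "(A - B) ** C = A ** C - B ** (C :: real^'n^'m)"
  by (simp add: matrix_eq matrix_vector_mul_assoc[symmetric] matrix_vector_mult_diff_rdistrib)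

lemma matrix_mul_uminus_left: "(- A) ** C = - (A ** (C :: real^'n^'m))"
  using matrix_diff_rdistrib[of 0 A C] by simp

lemma matrix_mul_uminus_right: "A ** (- C) = - (A ** (C :: real^'n^'m))"
  using matrix_diff_ldistrib[of A 0 C] by simp

lemma mat_matrix_mul: "mat k ** A = k *\<^sub>R (A :: real^'n^'m)"
  by (simp add: matrix_eq matrix_vector_mul_assoc[symmetric] mat_matrix_vector_mult
      scaleR_matrix_vector_assoc)

lemma matrix_mul_mat: "A ** mat k = k *\<^sub>R (A :: real^'n^'m)"
  by (simp add: matrix_eq matrix_vector_mul_assoc[symmetric] mat_matrix_vector_mult
      matrix_vector_mult_scaleR scaleR_matrix_vector_assoc)

lemma mat_add_scaleR_commute:
  "(mat a + p *\<^sub>R D) ** (mat c + q *\<^sub>R D) =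
    (mat c + q *\<^sub>R D) ** (mat a + p *\<^sub>R (D :: real^'n^'n))"
  by (simp add: matrix_eq matrix_vector_mul_assoc[symmetric] mat_matrix_vector_mult
      scaleR_matrix_vector_assoc[symmetric] algebra_simps)

lemma inner_matrix_vector_mult: "inner (A *v x) y = inner x (transpose A *v (y :: real^'n))"
  by (metis dot_lmul_matrix vector_transpose_matrix)

lemma orthogonal_matrix_inner:
  assumes "orthogonal_matrix (A :: real^'n^'n)"
  shows "inner (A *v x) (A *v y) = inner x y"
  using assms by (simp add: inner_matrix_vector_mult orthogonal_matrix matrix_vector_mul_assoc)

lemma orthogonal_matrix_commute_transpose:
  assumes A: "orthogonal_matrix (A :: real^'n^'n)" and AX: "A ** X = X ** A"
  shows "transpose A ** X = X ** transpose A"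
proof -
  have "transpose A ** X = transpose A ** X ** (A ** transpose A)"
    using A by (simp add: orthogonal_matrix_def)
  also have "\<dots> = transpose A ** (A ** X) ** transpose A"
    by (simp add: AX matrix_mul_assoc)
  also have "\<dots> = X ** transpose A"
    using A by (simp add: orthogonal_matrix_def matrix_mul_assoc)
  finally show ?thesis .
qed

lemma orthogonal_matrix_idempotent_eq_mat_1:
  assumes A: "orthogonal_matrix (A :: real^'n^'n)" and "A ** A = A"
  shows "A = mat 1"
proof -
  have "A = transpose A ** (A ** A)"
    using A by (simp add: orthogonal_matrix_def matrix_mul_assoc)
  then show ?thesis
    using assms by (simp add: orthogonal_matrix_def)
qed

lemma orthogonal_to_pairwise_orthogonal_basis:
  fixes S :: "'a::euclidean_space set"
  assumes S: "pairwise orthogonal S" "0 \<notin> S" "card S = DIM('a)"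
    and w: "\<And>v. v \<in> S \<Longrightarrow> orthogonal w v"
  shows "w = 0"
proof (rule ccontr)
  assume "w \<noteq> 0"
  then have "w \<notin> S"
    using w orthogonal_self by blast
  have "finite S"
    using S(3) DIM_positive card_ge_0_finite by metis
  have "pairwise orthogonal (insert w S)"
    using S(1) w by (auto simp: pairwise_insert orthogonal_commute)
  then have "independent (insert w S)"
    using \<open>w \<noteq> 0\<close> S(2) pairwise_orthogonal_independent by blast
  then have "card (insert w S) \<le> DIM('a)"
    using independent_bound by blast
  with \<open>finite S\<close> \<open>w \<notin> S\<close> S(3) show False
    by simp
qed

lemma skew_square_eq_0_imp_eq_0:
  assumes skew: "transpose D = - D" and "D ** D = (0 :: real^'n^'n)"
  shows "D = 0"
proof -
  have "inner (D *v x) (D *v x) = 0" for x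
  proof -
    have "inner (D *v x) (D *v x) = inner x (transpose D *v (D *v x))"
      by (rule inner_matrix_vector_mult)
    also have "\<dots> = - inner x ((D ** D) *v x)"
      by (simp add: skew matrix_vector_mul_assoc matrix_mul_uminus_left uminus_matrix_vector_mult)
    finally show ?thesis
      using assms by simp
  qed
  then show ?thesis
    by (simp add: matrix_eq)
qed

lemma symmetric_commuting_inner_eq_0:
  assumes sym: "transpose M = M" and A: "orthogonal_matrix A" "A ** A = - mat 1"
    and MA: "M ** A = A ** (M :: real^'n^'n)"
  shows "inner (M *v y) (A *v y) = 0"
proof -
  have A2: "A *v (A *v v) = - v" for v
    using A(2) by (simp add: matrix_vector_mul_assoc uminus_matrix_vector_mult)
  have "inner (M *v y) (A *v y) = inner y (A *v (M *v y))"
    using inner_matrix_vector_mult[of M y] sym by (simp add: matrix_vector_mul_assoc MA)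
  also have "\<dots> = inner (A *v y) (A *v (A *v (M *v y)))"
    using orthogonal_matrix_inner[OF A(1)] by simp
  also have "\<dots> = - inner (M *v y) (A *v y)"
    by (simp add: A2 inner_commute)
  finally show ?thesis
    by simp
qed

section \<open>Orthogonal \<open>4 \<times> 4\<close> matrices satisfying the relations of \<open>D\<^sup>*\<^sub>8\<close>\<close>

locale quaternion_relations =
  fixes I J :: "real^4^4"
  assumes orthogonal_I: "orthogonal_matrix I" and orthogonal_J: "orthogonal_matrix J"
    and J_square: "J ** J = I ** I"
    and J_I: "J ** I = (I ** I) ** (I ** J)"
    and I_fourth: "(I ** I) ** (I ** I) = mat 1"
begin

lemma orthogonal_IJ: "orthogonal_matrix (I ** J)"
  using orthogonal_I orthogonal_J orthogonal_matrix_mul by blast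

lemma frame_relations:
  assumes y: "I *v (I *v y) = - y"
  shows "J *v (J *v y) = - y" "J *v (I *v (J *v y)) = I *v y"
    "I *v (J *v (I *v (J *v y))) = - y"
proof -
  show J2: "J *v (J *v y) = - y"
    using y by (simp add: matrix_vector_mul_assoc J_square)
  have "J *v (I *v (J *v y)) = I *v (I *v (I *v (J *v (J *v y))))"
    by (simp add: matrix_vector_mul_assoc J_I matrix_mul_assoc)
  then show "J *v (I *v (J *v y)) = I *v y"
    using y J2 by (simp add: matrix_vector_mult_uminus)
  then show "I *v (J *v (I *v (J *v y))) = - y"
    using y by simp
qed

lemma frame_orthogonal:
  assumes y: "I *v (I *v y) = - y"
  shows "inner y (I *v y) = 0" "inner y (J *v y) = 0" "inner y (I *v (J *v y)) = 0"
    "inner (I *v y) (J *v y) = 0" "inner (I *v y) (I *v (J *v y)) = 0"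
    "inner (J *v y) (I *v (J *v y)) = 0"
proof -
  note rel = frame_relations[OF y]
  show yI: "inner y (I *v y) = 0"
    using orthogonal_matrix_inner[OF orthogonal_I, of y "I *v y"] y by (simp add: inner_commute)
  show yJ: "inner y (J *v y) = 0"
    using orthogonal_matrix_inner[OF orthogonal_J, of y "J *v y"] rel(1) by (simp add: inner_commute)
  show yK: "inner y (I *v (J *v y)) = 0"
    using orthogonal_matrix_inner[OF orthogonal_IJ, of y "(I ** J) *v y"] rel(3)
    by (simp add: inner_commute flip: matrix_vector_mul_assoc)
  show "inner (I *v y) (J *v y) = 0"
    using orthogonal_matrix_inner[OF orthogonal_I, of "I *v y" "J *v y"] y yK by simp
  show "inner (I *v y) (I *v (J *v y)) = 0"
    using orthogonal_matrix_inner[OF orthogonal_I, of y "J *v y"] yJ by simp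
  show "inner (J *v y) (I *v (J *v y)) = 0"
    using orthogonal_matrix_inner[OF orthogonal_J, of "J *v y" "I *v (J *v y)"] rel yI by simp
qed

lemma frame_orthogonal_eq_0:
  assumes y: "I *v (I *v y) = - y" "y \<noteq> 0"
    and w: "inner w y = 0" "inner w (I *v y) = 0" "inner w (J *v y) = 0"
      "inner w (I *v (J *v y)) = 0"
  shows "w = 0"
proof (rule orthogonal_to_pairwise_orthogonal_basis)
  let ?S = "{y, I *v y, J *v y, I *v (J *v y)}"
  note orth = frame_orthogonal[OF y(1)]
  show "pairwise orthogonal ?S"
    using orth by (auto simp: pairwise_insert orthogonal_def inner_commute)
  have nz: "I *v y \<noteq> 0" "J *v y \<noteq> 0" "I *v (J *v y) \<noteq> 0"
    using orthogonal_matrix_inner[OF orthogonal_I, of y y]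
      orthogonal_matrix_inner[OF orthogonal_J, of y y]
      orthogonal_matrix_inner[OF orthogonal_IJ, of y y] y(2)
    by (auto simp flip: matrix_vector_mul_assoc)
  then show "0 \<notin> ?S"
    using y(2) by auto
  have distinct: "x \<noteq> x'" if "inner x x' = 0" "x \<noteq> 0" for x x' :: "real^4"
    using that by auto
  show "card ?S = DIM(real^4)"
    using distinct[OF orth(1) y(2)] distinct[OF orth(2) y(2)] distinct[OF orth(3) y(2)]
      distinct[OF orth(4) nz(1)] distinct[OF orth(5) nz(1)] distinct[OF orth(6) nz(2)]
    by simp
  show "orthogonal w v" if "v \<in> ?S" for v
    using that w by (auto simp: orthogonal_def)
qed

lemma frame_eigenvectors:
  assumes y: "I *v (I *v y) = - y"
  shows "I *v (I *v (I *v y)) = - (I *v y)" "I *v (I *v (J *v y)) = - (J *v y)"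
    "I *v (I *v (I *v (J *v y))) = - (I *v (J *v y))"
proof -
  show "I *v (I *v (I *v y)) = - (I *v y)"
    using y by (simp add: matrix_vector_mult_uminus)
  have "I *v (I *v (J *v y)) = (J ** J) *v (J *v y)"
    by (simp add: J_square flip: matrix_vector_mul_assoc)
  then show "I *v (I *v (J *v y)) = - (J *v y)"
    using frame_relations(1)[OF y] by (simp add: matrix_vector_mult_uminus flip: matrix_vector_mul_assoc)
  then show "I *v (I *v (I *v (J *v y))) = - (I *v (J *v y))"
    by (simp add: matrix_vector_mult_uminus)
qed

lemma I_square_eq_neg_mat_1:
  assumes "I ** I \<noteq> mat 1"
  shows "I ** I = - mat 1"
proof -
  obtain w where w: "I *v (I *v w) \<noteq> w"
    using assms by (auto simp: matrix_eq simp flip: matrix_vector_mul_assoc)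
  define y where "y = w - I *v (I *v w)"
  have I4: "I *v (I *v (I *v (I *v v))) = v" for v
    using I_fourth by (simp add: matrix_vector_mul_assoc matrix_mul_assoc)
  have y: "I *v (I *v y) = - y" "y \<noteq> 0"
    using w I4[of w] by (simp_all add: y_def matrix_vector_mult_diff_distrib)
  \<comment> \<open>\<open>I\<^sup>2 + 1\<close> maps into the \<open>(+1)\<close>-eigenspace of the orthogonal involution \<open>I\<^sup>2\<close>,
    which is orthogonal to the frame of \<open>y\<close>.\<close>
  have perp: "inner (I *v (I *v v) + v) u = 0" if u: "I *v (I *v u) = - u" for u v
  proof -
    have "inner (I *v (I *v v)) u = - inner (I *v (I *v v)) (I *v (I *v u))"
      using u by simp
    also have "\<dots> = - inner v u"
      using orthogonal_matrix_inner[OF orthogonal_I] by simp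
    finally show ?thesis
      by (simp add: inner_add_left)
  qed
  have "I *v (I *v v) + v = 0" for v
    using frame_eigenvectors[OF y(1)]
    by (intro frame_orthogonal_eq_0[OF y] perp) (simp_all add: y(1))
  then show ?thesis
    by (simp add: matrix_eq eq_neg_iff_add_eq_0 uminus_matrix_vector_mult flip: matrix_vector_mul_assoc)
qed

end

locale quaternion_pair = quaternion_relations +
  assumes I_square: "I ** I = - mat 1"
begin

lemma I_square_vector: "I *v (I *v v) = - v"
  using I_square by (simp add: matrix_vector_mul_assoc uminus_matrix_vector_mult)

lemma J_square_neg: "J ** J = - mat 1"
  using J_square I_square by simp

lemma IJ_square: "(I ** J) ** (I ** J) = - mat 1"
proof -
  have "(I ** J) ** (I ** J) = I ** ((J ** I) ** J)"
    by (simp add: matrix_mul_assoc)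
  also have "\<dots> = ((I ** I) ** (I ** I)) ** (J ** J)"
    by (simp add: J_I matrix_mul_assoc)
  finally show ?thesis
    using I_fourth J_square_neg by simp
qed

lemma symmetric_commuting_eq_mat:
  assumes sym: "transpose M = M" and MI: "M ** I = I ** M" and MJ: "M ** J = J ** M"
  shows "\<exists>\<alpha>. M = mat \<alpha>"
proof -
  have Mv: "M *v (I *v v) = I *v (M *v v)" "M *v (J *v v) = J *v (M *v v)" for v
    by (simp_all add: matrix_vector_mul_assoc MI MJ)
  have M_inner: "inner (M *v x) z = inner x (M *v z)" for x z
    using inner_matrix_vector_mult[of M x z] sym by simp
  define y :: "real^4" where "y = axis 1 1"
  have y: "I *v (I *v y) = - y" "y \<noteq> 0"
    by (simp_all add: I_square_vector y_def)
  have MIJ: "M ** (I ** J) = (I ** J) ** M"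
    by (metis MI MJ matrix_mul_assoc)
  have perp: "inner (M *v y) (I *v y) = 0" "inner (M *v y) (J *v y) = 0"
    "inner (M *v y) (I *v (J *v y)) = 0"
    using symmetric_commuting_inner_eq_0[OF sym orthogonal_I I_square MI]
      symmetric_commuting_inner_eq_0[OF sym orthogonal_J J_square_neg MJ]
      symmetric_commuting_inner_eq_0[OF sym orthogonal_IJ IJ_square MIJ]
    by (simp_all flip: matrix_vector_mul_assoc)
  define \<alpha> where "\<alpha> = inner (M *v y) y / inner y y"
  have "M *v y - \<alpha> *\<^sub>R y = 0"
    using perp frame_orthogonal[OF y(1)] y(2)
    by (intro frame_orthogonal_eq_0[OF y]) (simp_all add: \<alpha>_def inner_diff_left)
  then have "M *v y = \<alpha> *\<^sub>R y" "M *v (I *v y) = \<alpha> *\<^sub>R (I *v y)"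
    "M *v (J *v y) = \<alpha> *\<^sub>R (J *v y)" "M *v (I *v (J *v y)) = \<alpha> *\<^sub>R (I *v (J *v y))"
    by (simp_all add: Mv matrix_vector_mult_scaleR)
  then have "M *v w - \<alpha> *\<^sub>R w = 0" for w
    by (intro frame_orthogonal_eq_0[OF y]) (simp_all add: inner_diff_left M_inner)
  then show ?thesis
    by (auto simp: matrix_eq mat_matrix_vector_mult)
qed

lemma skew_commuting_square_eq_mat:
  assumes skew: "transpose D = - D" and DI: "D ** I = I ** D" and DJ: "D ** J = J ** D"
  shows "\<exists>\<sigma>. D ** D = mat \<sigma>"
proof (rule symmetric_commuting_eq_mat)
  show "transpose (D ** D) = D ** D"
    by (simp add: matrix_transpose_mul skew matrix_mul_uminus_left matrix_mul_uminus_right)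
  show "D ** D ** I = I ** (D ** D)"
    by (metis DI matrix_mul_assoc)
  show "D ** D ** J = J ** (D ** D)"
    by (metis DJ matrix_mul_assoc)
qed

lemma orthogonal_commuting_decomposition:
  assumes skew: "transpose D = - D" and DI: "D ** I = I ** D" and DJ: "D ** J = J ** D"
    and DD: "D ** D = mat \<sigma>" "\<sigma> \<noteq> 0"
    and X: "orthogonal_matrix X" and XI: "X ** I = I ** X" and XJ: "X ** J = J ** X"
    and XD: "X ** D = D ** X"
  shows "\<exists>\<alpha> p. X = mat \<alpha> + p *\<^sub>R D"
proof -
  let ?T = "transpose X"
  have TI: "?T ** I = I ** ?T" and TJ: "?T ** J = J ** ?T" and TD: "?T ** D = D ** ?T"
    using orthogonal_matrix_commute_transpose[OF X] XI XJ XD by simp_all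
  have "transpose (X + ?T) = X + ?T"
    by (simp add: transpose_add add.commute)
  moreover have "(X + ?T) ** I = I ** (X + ?T)" "(X + ?T) ** J = J ** (X + ?T)"
    by (simp_all add: matrix_add_rdistrib matrix_add_ldistrib XI XJ TI TJ)
  ultimately obtain \<alpha> where sym_part: "X + ?T = mat \<alpha>"
    using symmetric_commuting_eq_mat by blast
  define P where "P = X - ?T"
  \<comment> \<open>\<open>P\<close> and \<open>D\<close> are commuting skew matrices, so \<open>P ** D\<close> is symmetric.\<close>
  obtain \<mu> where PD: "P ** D = mat \<mu>"
  proof -
    have "transpose (P ** D) = P ** D"
      by (simp add: P_def matrix_transpose_mul skew transpose_diff matrix_mul_uminus_left
          matrix_mul_uminus_right matrix_diff_ldistrib matrix_diff_rdistrib XD TD)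
    moreover have "P ** I = I ** P" "P ** J = J ** P"
      by (simp_all add: P_def matrix_diff_ldistrib matrix_diff_rdistrib XI XJ TI TJ)
    then have "P ** D ** I = I ** (P ** D)" "P ** D ** J = J ** (P ** D)"
      by (metis DI matrix_mul_assoc, metis DJ matrix_mul_assoc)
    ultimately show ?thesis
      using symmetric_commuting_eq_mat that by blast
  qed
  have "P = inverse \<sigma> *\<^sub>R (P ** (D ** D))"
    using DD by (simp add: matrix_mul_mat)
  also have "\<dots> = (\<mu> / \<sigma>) *\<^sub>R D"
    by (simp add: matrix_mul_assoc PD mat_matrix_mul divide_inverse_commute)
  finally have "P = (\<mu> / \<sigma>) *\<^sub>R D" .
  moreover have "X = (1 / 2) *\<^sub>R ((X + ?T) + P)"
    by (simp add: P_def flip: scaleR_add_right)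
  moreover have "(1 / 2) *\<^sub>R mat \<alpha> = (mat (\<alpha> / 2) :: real^4^4)"
    by (simp add: vec_eq_iff mat_def)
  ultimately have "X = mat (\<alpha> / 2) + (\<mu> / \<sigma> / 2) *\<^sub>R D"
    by (simp add: sym_part scaleR_add_right)
  then show ?thesis
    by blast
qed

end

lemma (in quaternion_relations) orthogonal_centralizer_commute:
  assumes I_square_ne: "I ** I \<noteq> mat 1"
    and C: "orthogonal_matrix C" "C ** I = I ** C" "C ** J = J ** C" "C ** C \<noteq> mat 1"
    and U: "orthogonal_matrix U" "U ** I = I ** U" "U ** J = J ** U" "U ** C = C ** U"
    and V: "orthogonal_matrix V" "V ** I = I ** V" "V ** J = J ** V" "V ** C = C ** V"
  shows "U ** V = V ** U"
proof -
  interpret quaternion_pair I J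
    using I_square_eq_neg_mat_1[OF I_square_ne] by unfold_locales
  \<comment> \<open>\<open>D\<close> is the imaginary part of the quaternion \<open>C\<close>; it is nonzero because \<open>C\<^sup>2 \<noteq> 1\<close>.\<close>
  define D where "D = C - transpose C"
  have commute_transpose_C: "transpose C ** X = X ** transpose C" if "C ** X = X ** C" for X
    using orthogonal_matrix_commute_transpose[OF C(1) that] .
  have skew: "transpose D = - D"
    by (simp add: D_def transpose_diff)
  have DI: "D ** I = I ** D" and DJ: "D ** J = J ** D"
    using C(2,3) commute_transpose_C[of I] commute_transpose_C[of J]
    by (simp_all add: D_def matrix_diff_ldistrib matrix_diff_rdistrib)
  obtain \<sigma> where DD: "D ** D = mat \<sigma>"
    using skew_commuting_square_eq_mat[OF skew DI DJ] by blast
  have "\<sigma> \<noteq> 0"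
  proof
    assume "\<sigma> = 0"
    then have "C = transpose C"
      using skew_square_eq_0_imp_eq_0[OF skew] DD by (simp add: D_def)
    then show False
      using C(1,4) by (metis orthogonal_matrix_def)
  qed
  have decomposition: "\<exists>\<alpha> p. X = mat \<alpha> + p *\<^sub>R D"
    if "orthogonal_matrix X" "X ** I = I ** X" "X ** J = J ** X" "X ** C = C ** X" for X
  proof (rule orthogonal_commuting_decomposition[OF skew DI DJ DD \<open>\<sigma> \<noteq> 0\<close> that(1-3)])
    show "X ** D = D ** X"
      using that(4) commute_transpose_C[of X]
      by (simp add: D_def matrix_diff_ldistrib matrix_diff_rdistrib)
  qed
  obtain a p c q where "U = mat a + p *\<^sub>R D" "V = mat c + q *\<^sub>R D"
    using decomposition[OF U] decomposition[OF V] by blast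
  then show ?thesis
    using mat_add_scaleR_commute by simp
qed

lemma (in monoid) orthogonal_embedding_centralizer_commute:
  assumes hom: "\<phi> \<in> hom G SO4" and inj: "inj_on \<phi> (carrier G)"
    and i_j: "i \<in> carrier G" "j \<in> carrier G" "j \<otimes> j = i \<otimes> i" "j \<otimes> i = (i \<otimes> i) \<otimes> (i \<otimes> j)"
      "(i \<otimes> i) \<otimes> (i \<otimes> i) = \<one>" "i \<otimes> i \<noteq> \<one>"
    and c: "c \<in> carrier G" "c \<otimes> i = i \<otimes> c" "c \<otimes> j = j \<otimes> c" "c \<otimes> c \<noteq> \<one>"
    and u: "u \<in> carrier G" "u \<otimes> i = i \<otimes> u" "u \<otimes> j = j \<otimes> u" "u \<otimes> c = c \<otimes> u"
    and v: "v \<in> carrier G" "v \<otimes> i = i \<otimes> v" "v \<otimes> j = j \<otimes> v" "v \<otimes> c = c \<otimes> v"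
  shows "u \<otimes> v = v \<otimes> u"
proof -
  have mult: "\<phi> x ** \<phi> y = \<phi> (x \<otimes> y)" if "x \<in> carrier G" "y \<in> carrier G" for x y
    using hom_mult[OF hom that] by (simp add: SO4_def)
  have orthogonal: "orthogonal_matrix (\<phi> x)" if "x \<in> carrier G" for x
    using hom_in_carrier[OF hom that] by (simp add: SO4_def)
  have one: "\<phi> \<one> = mat 1"
    using orthogonal_matrix_idempotent_eq_mat_1[OF orthogonal] mult by simp
  have commute: "\<phi> x ** \<phi> y = \<phi> y ** \<phi> x"
    if "x \<otimes> y = y \<otimes> x" "x \<in> carrier G" "y \<in> carrier G" for x y
    using that by (simp add: mult)
  have square_ne: "\<phi> x ** \<phi> x \<noteq> mat 1" if "x \<otimes> x \<noteq> \<one>" "x \<in> carrier G" for x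
    using that inj by (simp add: mult inj_on_eq_iff flip: one)
  interpret quaternion_relations "\<phi> i" "\<phi> j"
    using i_j by unfold_locales (simp_all add: orthogonal mult one)
  have "\<phi> u ** \<phi> v = \<phi> v ** \<phi> u"
    using orthogonal_centralizer_commute[OF square_ne[OF i_j(6,1)] orthogonal[OF c(1)]
        commute[OF c(2) c(1) i_j(1)] commute[OF c(3) c(1) i_j(2)] square_ne[OF c(4,1)]
        orthogonal[OF u(1)] commute[OF u(2) u(1) i_j(1)] commute[OF u(3) u(1) i_j(2)]
        commute[OF u(4) u(1) c(1)] orthogonal[OF v(1)] commute[OF v(2) v(1) i_j(1)]
        commute[OF v(3) v(1) i_j(2)] commute[OF v(4) v(1) c(1)]] .
  then show ?thesis
    using u(1) v(1) inj by (simp add: mult inj_on_eq_iff)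
qed

section \<open>The group \<open>G\<close>\<close>

lemma carrier_bin_dihedral: "carrier (bin_dihedral m) = {0..<2 * int m} \<times> {0, 1}"
  by (simp add: bin_dihedral_def)

lemma one_bin_dihedral: "\<one>\<^bsub>bin_dihedral m\<^esub> = (0, 0)"
  by (simp add: bin_dihedral_def)

lemma mult_bin_dihedral:
  "(i, e) \<otimes>\<^bsub>bin_dihedral m\<^esub> (j, f) =
    (if e = 0 then ((i + j) mod (2 * int m), f)
     else if f = 0 then ((i - j) mod (2 * int m), 1)
     else ((i - j + int m) mod (2 * int m), 0))"
  by (simp add: bin_dihedral_def)

lemma group_bin_dihedral:
  assumes "m > 0"
  shows "group (bin_dihedral m)"
proof (rule groupI)
  fix x y z
  assume "x \<in> carrier (bin_dihedral m)" "y \<in> carrier (bin_dihedral m)"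
    "z \<in> carrier (bin_dihedral m)"
  then show "x \<otimes>\<^bsub>bin_dihedral m\<^esub> y \<otimes>\<^bsub>bin_dihedral m\<^esub> z =
      x \<otimes>\<^bsub>bin_dihedral m\<^esub> (y \<otimes>\<^bsub>bin_dihedral m\<^esub> z)"
    apply (cases x; cases y; cases z)
      apply (auto simp: carrier_bin_dihedral mult_bin_dihedral mod_simps)
     apply (simp_all add: mod_eq_dvd_iff)
    apply (simp_all add: algebra_simps flip: minus_div_mult_eq_mod)
    done
next
  fix x
  assume x: "x \<in> carrier (bin_dihedral m)"
  then obtain i e where x_eq: "x = (i, e)" and e: "e = 0 \<or> e = 1"
    by (auto simp: carrier_bin_dihedral)
  let ?n = "2 * int m"
  have "((i + int m) mod ?n - i + int m) mod ?n = ((i + int m) - i + int m) mod ?n"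
    by (metis mod_add_left_eq mod_diff_left_eq)
  then have "(if e = 0 then (- i mod ?n, 0) else ((i + int m) mod ?n, 1)) \<otimes>\<^bsub>bin_dihedral m\<^esub> x =
      \<one>\<^bsub>bin_dihedral m\<^esub>"
    using e by (auto simp: x_eq mult_bin_dihedral one_bin_dihedral mod_simps)
  then show "\<exists>y \<in> carrier (bin_dihedral m). y \<otimes>\<^bsub>bin_dihedral m\<^esub> x = \<one>\<^bsub>bin_dihedral m\<^esub>"
    using assms by (intro bexI) (auto simp: carrier_bin_dihedral)
qed (use assms in \<open>auto simp: carrier_bin_dihedral mult_bin_dihedral one_bin_dihedral\<close>)

lemma (in group) central_involution_normal:
  assumes w: "w \<in> carrier G" "w \<otimes> w = \<one>"
    and central: "\<And>x. x \<in> carrier G \<Longrightarrow> w \<otimes> x = x \<otimes> w"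
  shows "{\<one>, w} \<lhd> G"
proof (rule normal_invI)
  have "inv w = w"
    using w by (simp add: inv_equality)
  then show "subgroup {\<one>, w} G"
    using w by (intro subgroupI) auto
  show "x \<otimes> h \<otimes> inv x \<in> {\<one>, w}" if x: "x \<in> carrier G" and h: "h \<in> {\<one>, w}" for x h
  proof -
    have "x \<otimes> h \<otimes> inv x = h \<otimes> x \<otimes> inv x"
      using h x central[OF x] by auto
    also have "\<dots> = h"
      using h x w by (auto simp: m_assoc)
    finally show ?thesis
      using h by simp
  qed
qed

abbreviation bin_dihedral_prod :: "nat \<Rightarrow> nat \<Rightarrow> ((int \<times> int) \<times> (int \<times> int)) monoid" where
  "bin_dihedral_prod m n \<equiv> bin_dihedral m \<times>\<times> bin_dihedral n"

abbreviation central_diagonal :: "nat \<Rightarrow> nat \<Rightarrow> ((int \<times> int) \<times> (int \<times> int)) set" where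
  "central_diagonal m n \<equiv> {((0, 0), (0, 0)), (bin_dihedral_z m, bin_dihedral_z n)}"

lemma bin_dihedral_z_central:
  assumes "m > 0"
  shows "bin_dihedral_z m \<in> carrier (bin_dihedral m)"
    "bin_dihedral_z m \<otimes>\<^bsub>bin_dihedral m\<^esub> bin_dihedral_z m = \<one>\<^bsub>bin_dihedral m\<^esub>"
    "x \<in> carrier (bin_dihedral m) \<Longrightarrow>
      bin_dihedral_z m \<otimes>\<^bsub>bin_dihedral m\<^esub> x = x \<otimes>\<^bsub>bin_dihedral m\<^esub> bin_dihedral_z m"
proof -
  have "(i + int m) mod (2 * int m) = (i - int m) mod (2 * int m)" for i
    by (simp add: mod_eq_dvd_iff)
  then show "bin_dihedral_z m \<in> carrier (bin_dihedral m)"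
    "bin_dihedral_z m \<otimes>\<^bsub>bin_dihedral m\<^esub> bin_dihedral_z m = \<one>\<^bsub>bin_dihedral m\<^esub>"
    "x \<in> carrier (bin_dihedral m) \<Longrightarrow>
      bin_dihedral_z m \<otimes>\<^bsub>bin_dihedral m\<^esub> x = x \<otimes>\<^bsub>bin_dihedral m\<^esub> bin_dihedral_z m"
    using assms by (auto simp: bin_dihedral_z_def carrier_bin_dihedral mult_bin_dihedral
        one_bin_dihedral add.commute)
qed

lemma central_diagonal_normal:
  assumes "m > 0" "n > 0"
  shows "central_diagonal m n \<lhd> bin_dihedral_prod m n"
proof -
  interpret group "bin_dihedral_prod m n"
    using assms by (simp add: DirProd_group group_bin_dihedral)
  note z_m = bin_dihedral_z_central[OF assms(1)] and z_n = bin_dihedral_z_central[OF assms(2)]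
  have "{\<one>\<^bsub>bin_dihedral_prod m n\<^esub>, (bin_dihedral_z m, bin_dihedral_z n)} \<lhd> bin_dihedral_prod m n"
  proof (rule central_involution_normal)
    show "(bin_dihedral_z m, bin_dihedral_z n) \<in> carrier (bin_dihedral_prod m n)"
      using z_m(1) z_n(1) by simp
    show "(bin_dihedral_z m, bin_dihedral_z n) \<otimes>\<^bsub>bin_dihedral_prod m n\<^esub>
        (bin_dihedral_z m, bin_dihedral_z n) = \<one>\<^bsub>bin_dihedral_prod m n\<^esub>"
      using z_m(2) z_n(2) by simp
    show "(bin_dihedral_z m, bin_dihedral_z n) \<otimes>\<^bsub>bin_dihedral_prod m n\<^esub> x =
        x \<otimes>\<^bsub>bin_dihedral_prod m n\<^esub> (bin_dihedral_z m, bin_dihedral_z n)"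
      if "x \<in> carrier (bin_dihedral_prod m n)" for x
      using that z_m(3) z_n(3) by (cases x) simp
  qed
  then show ?thesis
    by (simp add: one_bin_dihedral)
qed

lemma group_G_ab:
  assumes "a > 0"
  shows "group (G_ab a b)"
proof -
  interpret normal "central_diagonal 2 a" "bin_dihedral_prod 2 a"
    using central_diagonal_normal assms by simp
  show ?thesis
    unfolding G_ab_def central_prod_bd_def
    by (intro DirProd_group factorgroup_is_group group_integer_mod_group)
qed

definition G_ab_elem :: "nat \<Rightarrow> (int \<times> int) \<times> (int \<times> int) \<Rightarrow> int \<Rightarrow>
    ((int \<times> int) \<times> (int \<times> int)) set \<times> int" where
  "G_ab_elem a x k = (central_diagonal 2 a #>\<^bsub>bin_dihedral_prod 2 a\<^esub> x, k)"

lemma central_diagonal_coset: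
  assumes "x \<in> carrier (bin_dihedral_prod m n)"
  shows "central_diagonal m n #>\<^bsub>bin_dihedral_prod m n\<^esub> x =
    {x, (bin_dihedral_z m, bin_dihedral_z n) \<otimes>\<^bsub>bin_dihedral_prod m n\<^esub> x}"
  using assms by (cases x) (auto simp: r_coset_def carrier_bin_dihedral mult_bin_dihedral)

lemma G_ab_elem_eq_iff:
  assumes "a > 0" and x: "x \<in> carrier (bin_dihedral_prod 2 a)"
    and y: "y \<in> carrier (bin_dihedral_prod 2 a)"
  shows "G_ab_elem a x k = G_ab_elem a y l \<longleftrightarrow>
    k = l \<and> (y = x \<or> y = (bin_dihedral_z 2, bin_dihedral_z a) \<otimes>\<^bsub>bin_dihedral_prod 2 a\<^esub> x)"
proof -
  interpret normal "central_diagonal 2 a" "bin_dihedral_prod 2 a"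
    using central_diagonal_normal assms by simp
  have "central_diagonal 2 a #>\<^bsub>bin_dihedral_prod 2 a\<^esub> x =
      central_diagonal 2 a #>\<^bsub>bin_dihedral_prod 2 a\<^esub> y \<longleftrightarrow>
    y \<in> central_diagonal 2 a #>\<^bsub>bin_dihedral_prod 2 a\<^esub> x"
    using x y repr_independence[OF _ x subgroup_axioms] rcos_self[OF y subgroup_axioms] by blast
  then show ?thesis
    using central_diagonal_coset[OF x] by (auto simp: G_ab_elem_def)
qed

lemma carrier_G_ab_elem:
  assumes "b > 0" "x \<in> carrier (bin_dihedral_prod 2 a)" "0 \<le> k" "k < int b"
  shows "G_ab_elem a x k \<in> carrier (G_ab a b)"
  using assms by (auto simp: G_ab_def central_prod_bd_def G_ab_elem_def carrier_FactGroup
      carrier_integer_mod_group)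

lemma one_G_ab:
  assumes "a > 0"
  shows "\<one>\<^bsub>G_ab a b\<^esub> = G_ab_elem a ((0, 0), (0, 0)) 0"
proof -
  interpret normal "central_diagonal 2 a" "bin_dihedral_prod 2 a"
    using central_diagonal_normal assms by simp
  show ?thesis
    using coset_mult_one[OF subset]
    by (simp add: G_ab_def central_prod_bd_def G_ab_elem_def one_bin_dihedral)
qed

lemma mult_G_ab_elem:
  assumes "a > 0" "x \<in> carrier (bin_dihedral_prod 2 a)" "y \<in> carrier (bin_dihedral_prod 2 a)"
  shows "G_ab_elem a x k \<otimes>\<^bsub>G_ab a b\<^esub> G_ab_elem a y l =
    G_ab_elem a (x \<otimes>\<^bsub>bin_dihedral_prod 2 a\<^esub> y) ((k + l) mod int b)"
proof -
  interpret normal "central_diagonal 2 a" "bin_dihedral_prod 2 a"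
    using central_diagonal_normal assms by simp
  show ?thesis
    using rcos_sum[OF assms(2,3)]
    by (simp add: G_ab_def central_prod_bd_def G_ab_elem_def)
qed

lemma G_ab_quaternion_centralizer:
  assumes "a \<ge> 2" "b \<ge> 3"
  obtains i j c u v where
    "i \<in> carrier (G_ab a b)" "j \<in> carrier (G_ab a b)"
    "j \<otimes>\<^bsub>G_ab a b\<^esub> j = i \<otimes>\<^bsub>G_ab a b\<^esub> i"
    "j \<otimes>\<^bsub>G_ab a b\<^esub> i = (i \<otimes>\<^bsub>G_ab a b\<^esub> i) \<otimes>\<^bsub>G_ab a b\<^esub> (i \<otimes>\<^bsub>G_ab a b\<^esub> j)"
    "(i \<otimes>\<^bsub>G_ab a b\<^esub> i) \<otimes>\<^bsub>G_ab a b\<^esub> (i \<otimes>\<^bsub>G_ab a b\<^esub> i) = \<one>\<^bsub>G_ab a b\<^esub>"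
    "i \<otimes>\<^bsub>G_ab a b\<^esub> i \<noteq> \<one>\<^bsub>G_ab a b\<^esub>"
    "c \<in> carrier (G_ab a b)" "c \<otimes>\<^bsub>G_ab a b\<^esub> i = i \<otimes>\<^bsub>G_ab a b\<^esub> c"
    "c \<otimes>\<^bsub>G_ab a b\<^esub> j = j \<otimes>\<^bsub>G_ab a b\<^esub> c" "c \<otimes>\<^bsub>G_ab a b\<^esub> c \<noteq> \<one>\<^bsub>G_ab a b\<^esub>"
    "u \<in> carrier (G_ab a b)" "u \<otimes>\<^bsub>G_ab a b\<^esub> i = i \<otimes>\<^bsub>G_ab a b\<^esub> u"
    "u \<otimes>\<^bsub>G_ab a b\<^esub> j = j \<otimes>\<^bsub>G_ab a b\<^esub> u" "u \<otimes>\<^bsub>G_ab a b\<^esub> c = c \<otimes>\<^bsub>G_ab a b\<^esub> u"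
    "v \<in> carrier (G_ab a b)" "v \<otimes>\<^bsub>G_ab a b\<^esub> i = i \<otimes>\<^bsub>G_ab a b\<^esub> v"
    "v \<otimes>\<^bsub>G_ab a b\<^esub> j = j \<otimes>\<^bsub>G_ab a b\<^esub> v" "v \<otimes>\<^bsub>G_ab a b\<^esub> c = c \<otimes>\<^bsub>G_ab a b\<^esub> v"
    "u \<otimes>\<^bsub>G_ab a b\<^esub> v \<noteq> v \<otimes>\<^bsub>G_ab a b\<^esub> u"
proof -
  have a: "a > 0" "a \<noteq> 1" and b: "b > 0" "1 < int b"
    using assms by auto
  have mods: "(- 1) mod (2 * int a) = 2 * int a - 1" "1 mod (2 * int a) = 1"
    "int a mod (2 * int a) = int a" "(int a + 1) mod (2 * int a) = int a + 1"
    "1 mod int b = 1" "2 mod int b = 2"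
    using assms by (simp_all add: zmod_minus1)
  \<comment> \<open>\<open>i, j\<close> are the generators of \<open>D\<^sup>*\<^sub>8\<close>, \<open>c\<close> generates \<open>\<int>\<^sub>b\<close>, and \<open>u, v\<close> are the
    generators of \<open>D\<^sup>*\<^sub>4\<^sub>a\<close>.\<close>
  show ?thesis
    by (rule that[of "G_ab_elem a ((1, 0), (0, 0)) 0" "G_ab_elem a ((0, 1), (0, 0)) 0"
          "G_ab_elem a ((0, 0), (0, 0)) 1" "G_ab_elem a ((0, 0), (1, 0)) 0"
          "G_ab_elem a ((0, 0), (0, 1)) 0"])
      (use a b mods in \<open>simp_all add: carrier_bin_dihedral carrier_G_ab_elem mult_G_ab_elem one_G_ab
        G_ab_elem_eq_iff mult_bin_dihedral bin_dihedral_z_def\<close>)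
qed

theorem mainTheorem6:
  fixes a b :: nat
  assumes "odd a" and "odd b" and "a \<ge> 3" and "b \<ge> 3" and "coprime a b"
  shows "\<not> (\<exists>H. subgroup H SO4 \<and> G_ab a b \<cong> SO4\<lparr>carrier := H\<rparr>)"
proof
  assume "\<exists>H. subgroup H SO4 \<and> G_ab a b \<cong> SO4\<lparr>carrier := H\<rparr>"
  then obtain H \<phi> where H: "subgroup H SO4" and \<phi>: "\<phi> \<in> iso (G_ab a b) (SO4\<lparr>carrier := H\<rparr>)"
    by (auto simp: is_iso_def)
  have hom: "\<phi> \<in> hom (G_ab a b) SO4"
    using \<phi> subgroup.subset[OF H] by (auto simp: iso_def hom_def)
  have inj: "inj_on \<phi> (carrier (G_ab a b))"
    using \<phi> by (simp add: iso_def bij_betw_def)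
  interpret monoid "G_ab a b"
    using group_G_ab assms(3) by (simp add: group.is_monoid)
  have "a \<ge> 2"
    using assms(3) by simp
  \<comment> \<open>\<open>assumption\<close> backtracks until it picks the relation \<open>u \<otimes> v \<noteq> v \<otimes> u\<close>.\<close>
  then show False
    by (rule G_ab_quaternion_centralizer[OF _ assms(4)])
      (rule notE, assumption, rule orthogonal_embedding_centralizer_commute[OF hom inj])
qed

end
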